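(* Let $S$ be a smooth Del Pezzo surface, let $E\subset S$ be a smooth effective anticanonical divisor, let $\beta\in H_2(S,\mathbb{Z})$ be an effective non-zero primitive curve class, and set $w=E\cdot\beta$. Let $\{N_S[dw]\}_{d\ge1}$ and $\{I_{K_S}(d\beta)\}_{d\ge1}$ be two arbitrary sequences of rational numbers, and assume that for all $d\ge1$, $$N_S[dw]=(-1)^{dw+1}\,dw\,I_{K_S}(d\beta).$$ Define sequences of rational numbers $\{n_{d\beta}\}_{d\ge1}$ and $\{n_S[dw]\}_{d\ge1}$ by the equalities of formal power series in $q$ $$\sum_{l=1}^{\infty}I_{K_S}(l\beta)\,q^l=\sum_{d=1}^{\infty}n_{d\beta}\sum_{k=1}^{\infty}\frac{1}{k^3}\,q^{dk},$$ $$\sum_{l=1}^{\infty}N_S[lw]\,q^l=\sum_{d=1}^{\infty}n_S[dw]\sum_{k=1}^{\infty}\frac{1}{k^2}\binom{k(dw-1)-1}{k-1}\,q^{dk}.$$ Then $n_S[dw]\in\mathbb{Z}$ for all $d\ge1$ if and only if $dw\cdot n_{d\beta}\in\mathbb{Z}$ for all $d\ge1$.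
   Context: Binomial coefficients $\binom{n}{m}$ with $n\in\mathbb{Z}$ and $m\ge0$ an integer are understood as $n(n-1)\cdots(n-m+1)/m!$. The two power-series identities determine the sequences $n_{d\beta}$ and $n_S[dw]$ uniquely (by comparing coefficients of $q^d$ recursively in $d$). *)

theory Defs
  imports Complex_Main
begin

end

theory Submission
  imports Defs "HOL-Number_Theory.Number_Theory"
begin

text \<open>
  Put \<open>m d = d w n d\<close>. Multiplied by \<open>l^2\<close>, both series identities become divisor sums
  with weights \<open>d^2\<close>, and \<open>N = \<plusminus>l w I\<close> turns them into
  \<open>(\<Sum>d dvd l. d^2 m d) = (\<Sum>e dvd l. e^2 nS e c e (l/e))\<close> with
  \<open>c e k = (-1)^(k e w + 1) (k (e w - 1) - 1 choose k - 1)\<close>.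
  These coefficients satisfy \<open>c e (p^r m) \<equiv> c e (p^(r-1) m) mod p^(2r)\<close>: writing
  \<open>p^r m = p n\<close> and removing the factors divisible by \<open>p\<close> from the falling product of the
  binomial coefficient leaves a product over the \<open>i < p n\<close> prime to \<open>p\<close>, and pairing \<open>i\<close>
  with \<open>p n - i\<close> shows that it is congruent to \<open>\<plusminus>\<close> the product of these \<open>i\<close> themselves.
  By induction over divisors, such congruences yield integers \<open>T e j\<close> with
  \<open>c e k = (\<Sum>j dvd k. j^2 T e j)\<close>, and \<open>T e 1 = c e 1 = \<plusminus>1\<close>.
  Inverting the weighted divisor sums gives \<open>m l = (\<Sum>e dvd l. nS e T e (l/e))\<close>, a
  unitriangular integral system, so \<open>nS\<close> is integral if and only if \<open>m\<close> is.
\<close>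

lemma divisors_eq_insert_self:
  fixes l :: nat
  assumes "0 < l"
  shows "{d. d dvd l} = insert l {d. d dvd l \<and> d < l}"
  using assms by (auto dest: dvd_imp_le)

lemma divisor_pos:
  fixes l d :: nat
  assumes "0 < l" "d dvd l"
  shows "0 < d" "0 < l div d"
  using assms by (auto intro: Nat.gr0I dest: dvd_div_eq_0_iff)

lemma sum_divisors_swap:
  fixes f :: "nat \<Rightarrow> nat \<Rightarrow> 'a::comm_monoid_add"
  assumes "0 < l"
  shows "(\<Sum>d | d dvd l. \<Sum>e | e dvd d. f d e) = (\<Sum>e | e dvd l. \<Sum>j | j dvd l div e. f (e * j) e)"
proof -
  have fin: "finite {d. d dvd k}" if "k dvd l" for k
    using divisor_pos(1)[OF assms that] by simp
  have fin': "finite {j. j dvd l div e}" if "e dvd l" for e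
    using divisor_pos(2)[OF assms that] by simp
  have "(\<Sum>d | d dvd l. \<Sum>e | e dvd d. f d e) = (\<Sum>(d, e) \<in> (SIGMA d:{d. d dvd l}. {e. e dvd d}). f d e)"
    using fin dvd_trans by (intro sum.Sigma) auto
  also have "\<dots> = (\<Sum>(e, j) \<in> (SIGMA e:{e. e dvd l}. {j. j dvd l div e}). f (e * j) e)"
  proof (rule sum.reindex_bij_witness[where i = "\<lambda>(e, j). (e * j, e)" and j = "\<lambda>(d, e). (e, d div e)"])
    fix de assume "de \<in> (SIGMA d:{d. d dvd l}. {e. e dvd d})"
    then obtain d e where de: "de = (d, e)" "d dvd l" "e dvd d" by auto
    then have "e dvd l" "d div e dvd l div e" "e * (d div e) = d"
      using dvd_trans div_dvd_div by auto
    then show "(case case de of (d, e) \<Rightarrow> (e, d div e) of (e, j) \<Rightarrow> (e * j, e)) = de"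
      and "(case de of (d, e) \<Rightarrow> (e, d div e)) \<in> (SIGMA e:{e. e dvd l}. {j. j dvd l div e})"
      and "(case case de of (d, e) \<Rightarrow> (e, d div e) of (e, j) \<Rightarrow> f (e * j) e) = (case de of (d, e) \<Rightarrow> f d e)"
      using de by auto
  next
    fix ej assume "ej \<in> (SIGMA e:{e. e dvd l}. {j. j dvd l div e})"
    then obtain e j where ej: "ej = (e, j)" "e dvd l" "j dvd l div e" by auto
    have "0 < e" using divisor_pos(1)[OF assms ej(2)] .
    have "e * j dvd e * (l div e)" using ej(3) by simp
    with ej(2) have "e * j dvd l" by simp
    with \<open>0 < e\<close> show "(case case ej of (e, j) \<Rightarrow> (e * j, e) of (d, e) \<Rightarrow> (e, d div e)) = ej"
      and "(case ej of (e, j) \<Rightarrow> (e * j, e)) \<in> (SIGMA d:{d. d dvd l}. {e. e dvd d})"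
      using ej by auto
  qed
  also have "\<dots> = (\<Sum>e | e dvd l. \<Sum>j | j dvd l div e. f (e * j) e)"
    using fin[of l] fin' by (intro sum.Sigma[symmetric]) auto
  finally show ?thesis .
qed

lemma scaled_divisor_sum:
  fixes f :: "nat \<Rightarrow> nat \<Rightarrow> 'a::field_char_0"
  assumes "0 < l"
  shows "of_nat (l ^ s) * (\<Sum>d | d dvd l. f d (l div d) / of_nat (l div d) ^ s)
       = (\<Sum>d | d dvd l. of_nat (d ^ s) * f d (l div d))"
  unfolding sum_distrib_left
proof (rule sum.cong)
  fix d assume "d \<in> {d. d dvd l}"
  then have "0 < l div d" "l = d * (l div d)" using divisor_pos[OF assms] by auto
  then have "(of_nat (l ^ s) :: 'a) = of_nat (d ^ s) * of_nat (l div d) ^ s"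
    by (metis of_nat_mult of_nat_power power_mult_distrib)
  then show "of_nat (l ^ s) * (f d (l div d) / of_nat (l div d) ^ s) = of_nat (d ^ s) * f d (l div d)"
    using \<open>0 < l div d\<close> by simp
qed simp

lemma weighted_divisor_sums_eqD:
  fixes x y :: "nat \<Rightarrow> 'a::field_char_0"
  assumes eq: "\<And>l. 0 < l \<Longrightarrow>
      (\<Sum>d | d dvd l. of_nat (d ^ s) * x d) = (\<Sum>d | d dvd l. of_nat (d ^ s) * y d)"
  shows "0 < l \<Longrightarrow> x l = y l"
proof (induction l rule: less_induct)
  case (less l)
  have "(\<Sum>d | d dvd l \<and> d < l. of_nat (d ^ s) * x d) = (\<Sum>d | d dvd l \<and> d < l. of_nat (d ^ s) * y d)"
    using less.IH divisor_pos(1)[OF less.prems] by (intro sum.cong) auto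
  then have "of_nat (l ^ s) * x l = of_nat (l ^ s) * y l"
    using eq[OF less.prems] unfolding divisors_eq_insert_self[OF less.prems] by simp
  then show ?case using less.prems by simp
qed

lemma divisor_convolution_eq:
  fixes x y :: "nat \<Rightarrow> 'a::field_char_0" and u T :: "nat \<Rightarrow> nat \<Rightarrow> int"
  assumes u: "\<And>e k. 0 < k \<Longrightarrow> u e k = (\<Sum>j | j dvd k. int (j ^ s) * T e j)"
    and rel: "\<And>l. 0 < l \<Longrightarrow> (\<Sum>d | d dvd l. of_nat (d ^ s) * y d)
                                  = (\<Sum>e | e dvd l. of_nat (e ^ s) * x e * of_int (u e (l div e)))"
    and "0 < l"
  shows "y l = (\<Sum>e | e dvd l. x e * of_int (T e (l div e)))"
proof (rule weighted_divisor_sums_eqD[of s y, OF _ \<open>0 < l\<close>])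
  fix l :: nat assume l: "0 < l"
  have "(\<Sum>d | d dvd l. of_nat (d ^ s) * (\<Sum>e | e dvd d. x e * of_int (T e (d div e))))
      = (\<Sum>e | e dvd l. \<Sum>j | j dvd l div e. of_nat ((e * j) ^ s) * (x e * of_int (T e (e * j div e))))"
    unfolding sum_distrib_left by (rule sum_divisors_swap[OF l])
  also have "\<dots> = (\<Sum>e | e dvd l. of_nat (e ^ s) * x e * of_int (u e (l div e)))"
  proof (rule sum.cong)
    fix e assume "e \<in> {e. e dvd l}"
    then have e: "0 < e" "0 < l div e" using divisor_pos[OF l] by auto
    have "(\<Sum>j | j dvd l div e. of_nat ((e * j) ^ s) * (x e * of_int (T e (e * j div e))))
        = of_nat (e ^ s) * x e * of_int (\<Sum>j | j dvd l div e. int (j ^ s) * T e j)"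
      using e(1) by (simp add: sum_distrib_left power_mult_distrib algebra_simps)
    then show "(\<Sum>j | j dvd l div e. of_nat ((e * j) ^ s) * (x e * of_int (T e (e * j div e))))
        = of_nat (e ^ s) * x e * of_int (u e (l div e))"
      using u[OF e(2)] by simp
  qed simp
  finally show "(\<Sum>d | d dvd l. of_nat (d ^ s) * y d)
      = (\<Sum>d | d dvd l. of_nat (d ^ s) * (\<Sum>e | e dvd d. x e * of_int (T e (d div e))))"
    using rel[OF l] by simp
qed

lemma Ints_iff_of_unitriangular_divisor_sum:
  fixes x y :: "nat \<Rightarrow> 'a::comm_ring_1" and T :: "nat \<Rightarrow> nat \<Rightarrow> int"
  assumes y: "\<And>l. 0 < l \<Longrightarrow> y l = (\<Sum>e | e dvd l. x e * of_int (T e (l div e)))"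
    and diag: "\<And>e. \<bar>T e 1\<bar> = 1"
  shows "(\<forall>d>0. x d \<in> \<int>) \<longleftrightarrow> (\<forall>d>0. y d \<in> \<int>)"
proof
  assume "\<forall>d>0. x d \<in> \<int>"
  then show "\<forall>d>0. y d \<in> \<int>"
    using y divisor_pos(1) by (auto intro!: Ints_sum Ints_mult)
next
  assume yZ: "\<forall>d>0. y d \<in> \<int>"
  show "\<forall>d>0. x d \<in> \<int>"
  proof (intro allI impI)
    fix l :: nat assume "0 < l"
    then show "x l \<in> \<int>"
    proof (induction l rule: less_induct)
      case (less l)
      define R where "R = (\<Sum>e | e dvd l \<and> e < l. x e * of_int (T e (l div e)))"
      have "R \<in> \<int>"
        unfolding R_def using less.IH divisor_pos(1)[OF less.prems] by (auto intro!: Ints_sum Ints_mult)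
      have "y l = x l * of_int (T l 1) + R"
        unfolding R_def y[OF less.prems] divisors_eq_insert_self[OF less.prems] using less.prems by simp
      then have "of_int (T l 1) * (y l - R) = x l * of_int (T l 1 * T l 1)"
        by (simp add: algebra_simps)
      also have "T l 1 * T l 1 = 1"
        using diag[of l] abs_mult_self_eq[of "T l 1"] by simp
      finally have "x l = of_int (T l 1) * (y l - R)" by simp
      then show ?case using \<open>R \<in> \<int>\<close> yZ less.prems by (simp add: Ints_mult Ints_diff)
    qed
  qed
qed

lemma power_dvd_of_prime_power_dvd:
  fixes X :: int and k :: nat
  assumes "0 < k"
    and dvd: "\<And>p. prime p \<Longrightarrow> int p ^ (s * multiplicity p k) dvd X"
  shows "int (k ^ s) dvd X"
proof (cases "X = 0")
  case False
  have "k ^ s dvd nat \<bar>X\<bar>"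
  proof (rule multiplicity_le_imp_dvd)
    show "k ^ s \<noteq> 0" using assms(1) by simp
    fix p :: nat assume p: "prime p"
    have "p ^ (s * multiplicity p k) dvd nat \<bar>X\<bar>"
      using dvd[OF p] by (simp add: dvd_nat_abs_iff flip: of_nat_power)
    then have "s * multiplicity p k \<le> multiplicity p (nat \<bar>X\<bar>)"
      using False p by (intro multiplicity_geI) (auto simp: prime_gt_1_nat)
    then show "multiplicity p (k ^ s) \<le> multiplicity p (nat \<bar>X\<bar>)"
      using p assms(1) by (simp add: prime_elem_multiplicity_power_distrib)
  qed
  then show ?thesis by (simp add: dvd_nat_abs_iff)
qed simp

lemma prime_power_dvd_of_not_dvd:
  fixes p r m j :: nat
  assumes "prime p" "0 < r" "j dvd p ^ r * m" "\<not> j dvd p ^ (r - 1) * m"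
  shows "p ^ r dvd j"
proof -
  obtain b c where bc: "j = b * c" "b dvd p ^ r" "c dvd m"
    using division_decomp[OF assms(3)] by blast
  then obtain i where i: "i \<le> r" "b = p ^ i"
    using divides_primepow_nat[OF assms(1)] by blast
  show ?thesis
  proof (cases "i = r")
    case False
    then have "b dvd p ^ (r - 1)" using i by (simp add: le_imp_power_dvd)
    then show ?thesis using bc assms(4) mult_dvd_mono by blast
  qed (use bc i in simp)
qed

lemma prime_power_dvd_weighted_remainder:
  fixes u T :: "nat \<Rightarrow> int"
  assumes cong: "\<And>p r m. prime p \<Longrightarrow> 0 < r \<Longrightarrow> \<not> p dvd m \<Longrightarrow>
      [u (p ^ r * m) = u (p ^ (r - 1) * m)] (mod int p ^ (s * r))"
    and solved: "\<And>k'. 0 < k' \<Longrightarrow> k' < k \<Longrightarrow> u k' = (\<Sum>j | j dvd k'. int (j ^ s) * T j)"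
    and p: "prime p" and "0 < k"
  shows "int p ^ (s * multiplicity p k) dvd u k - (\<Sum>j | j dvd k \<and> j < k. int (j ^ s) * T j)"
proof -
  define r where "r = multiplicity p k"
  have "\<not> is_unit p" using p not_prime_unit by blast
  then obtain m where k: "k = p ^ r * m" and pm: "\<not> p dvd m"
    using multiplicity_decompose'[of k p] \<open>0 < k\<close> unfolding r_def by auto
  show ?thesis
  proof (cases "r = 0")
    case False
    define k' where "k' = p ^ (r - 1) * m"
    have "k = p * k'"
      using k False unfolding k'_def by (metis mult.assoc power_eq_if)
    then have "0 < k'" "k' < k"
      using \<open>0 < k\<close> prime_gt_1_nat[OF p] by auto
    define B where "B = {j. j dvd k \<and> j < k \<and> \<not> j dvd k'}"
    have "j < k" if "j dvd k'" for j
      using dvd_imp_le[OF that \<open>0 < k'\<close>] \<open>k' < k\<close> by linarith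
    then have divisors_split: "{j. j dvd k \<and> j < k} = {j. j dvd k'} \<union> B"
      using \<open>k = p * k'\<close> unfolding B_def by auto
    have R: "(\<Sum>j | j dvd k \<and> j < k. int (j ^ s) * T j) = u k' + (\<Sum>j\<in>B. int (j ^ s) * T j)"
      unfolding divisors_split solved[OF \<open>0 < k'\<close> \<open>k' < k\<close>]
      using \<open>0 < k'\<close> by (subst sum.union_disjoint) (auto simp: B_def)
    have "int p ^ (s * r) dvd (\<Sum>j\<in>B. int (j ^ s) * T j)"
    proof (rule dvd_sum)
      fix j assume "j \<in> B"
      then have "p ^ r dvd j"
        using prime_power_dvd_of_not_dvd[OF p, of r j m] False k unfolding B_def k'_def by auto
      then have "(p ^ r) ^ s dvd j ^ s" by (rule dvd_power_same)
      then have "int p ^ (s * r) dvd int (j ^ s)"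
        by (simp add: mult.commute[of s r] power_mult flip: of_nat_power)
      then show "int p ^ (s * r) dvd int (j ^ s) * T j" by simp
    qed
    moreover have "int p ^ (s * r) dvd u k - u k'"
      using cong[OF p _ pm, of r] False k unfolding k'_def
      by (simp add: cong_iff_dvd_diff dvd_diff_commute)
    ultimately show ?thesis
      unfolding R r_def[symmetric] by (metis diff_diff_eq dvd_diff)
  qed (simp add: r_def[symmetric])
qed

text \<open>
  The recursion solves \<open>u k = (\<Sum>j dvd k. j^s T j)\<close> for \<open>T k\<close>; the integer division by
  \<open>k^s\<close> is exact when \<open>u\<close> satisfies the weighted Gauss congruences below.
\<close>

function weighted_divisor_inverse :: "nat \<Rightarrow> (nat \<Rightarrow> int) \<Rightarrow> nat \<Rightarrow> int" where
  "weighted_divisor_inverse s u k =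
     (u k - (\<Sum>j | j dvd k \<and> j < k. int (j ^ s) * weighted_divisor_inverse s u j)) div int (k ^ s)"
  by auto
termination by (relation "measure (\<lambda>(_, _, k). k)") auto

declare weighted_divisor_inverse.simps [simp del]

lemma weighted_divisor_inverse_sum:
  fixes u :: "nat \<Rightarrow> int"
  assumes cong: "\<And>p r m. prime p \<Longrightarrow> 0 < r \<Longrightarrow> \<not> p dvd m \<Longrightarrow>
      [u (p ^ r * m) = u (p ^ (r - 1) * m)] (mod int p ^ (s * r))"
  shows "0 < k \<Longrightarrow> u k = (\<Sum>j | j dvd k. int (j ^ s) * weighted_divisor_inverse s u j)"
proof (induction k rule: less_induct)
  case (less k)
  let ?T = "weighted_divisor_inverse s u"
  define R where "R = (\<Sum>j | j dvd k \<and> j < k. int (j ^ s) * ?T j)"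
  have "int (k ^ s) dvd u k - R"
    unfolding R_def using less prime_power_dvd_weighted_remainder[OF cong]
    by (intro power_dvd_of_prime_power_dvd) auto
  moreover have "?T k = (u k - R) div int (k ^ s)"
    unfolding R_def by (subst weighted_divisor_inverse.simps) simp
  ultimately have "u k = int (k ^ s) * ?T k + R" by simp
  then show ?case
    unfolding R_def divisors_eq_insert_self[OF less.prems] using less.prems by simp
qed

lemma fact_eq_prod_atLeastLessThan:
  assumes "0 < k"
  shows "fact (k - 1) = (\<Prod>i\<in>{1..<k}. int i)"
proof -
  have "{1..<k} = {1..k - 1}" using assms by auto
  then show ?thesis by (simp add: fact_prod)
qed

lemma fact_times_binomial_eq_prod:
  fixes k a :: nat
  assumes "0 < k" "0 < a"
  shows "fact (k - 1) * int ((k * a - 1) choose (k - 1)) = (\<Prod>i\<in>{1..<k}. int (k * a) - int i)"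
proof -
  have "(of_int (fact (k - 1) * int ((k * a - 1) choose (k - 1))) :: rat)
      = fact (k - 1) * (of_nat (k * a - 1) gchoose (k - 1))"
    by (simp add: binomial_gbinomial)
  also have "\<dots> = (\<Prod>i = 0..<k - 1. of_nat (k * a - 1) - of_nat i)"
    by (rule gbinomial_mult_fact)
  also have "\<dots> = (\<Prod>i = 0..<k - 1. of_nat (k * a) - of_nat (Suc i))"
    using assms by (intro prod.cong) (auto simp: of_nat_diff)
  also have "\<dots> = (\<Prod>i = 1..<k. of_nat (k * a) - of_nat i)"
    using assms prod.shift_bounds_nat_ivl[of "\<lambda>i. of_nat (k * a) - (of_nat i :: rat)" 0 1 "k - 1"]
    by simp
  also have "\<dots> = of_int (\<Prod>i\<in>{1..<k}. int (k * a) - int i)" by simp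
  finally show ?thesis by (simp only: of_int_eq_iff)
qed

lemma prod_atLeastLessThan_mult_split:
  fixes f :: "nat \<Rightarrow> 'a::comm_monoid_mult"
  assumes "0 < p"
  shows "(\<Prod>i\<in>{1..<p * n}. f i)
       = (\<Prod>j\<in>{1..<n}. f (p * j)) * (\<Prod>i\<in>{i\<in>{1..<p * n}. \<not> p dvd i}. f i)"
proof -
  have split: "{1..<p * n} = (\<lambda>j. p * j) ` {1..<n} \<union> {i\<in>{1..<p * n}. \<not> p dvd i}"
    using assms by (auto simp: Suc_le_eq elim!: dvdE)
  have "inj_on (\<lambda>j. p * j) {1..<n}" using assms by (auto simp: inj_on_def)
  then show ?thesis
    by (subst split, subst prod.union_disjoint) (auto simp: prod.reindex)
qed

lemma prod_reflected_pairs_cong: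
  fixes M :: nat and S :: "nat set" and x q :: int
  assumes "finite S" "S \<subseteq> {1..<M}"
    and reflect: "\<And>i. i \<in> S \<Longrightarrow> M - i \<in> S"
    and no_middle: "\<And>i. i \<in> S \<Longrightarrow> 2 * i \<noteq> M"
    and "q dvd x" "q dvd int M"
  shows "[(\<Prod>i\<in>S. x - int i) = (\<Prod>i\<in>S. int i)] (mod q ^ 2)"
proof -
  define L where "L = {i\<in>S. 2 * i < M}"
  have "i \<in> L \<union> (\<lambda>i. M - i) ` L" if "i \<in> S" for i
  proof (cases "2 * i < M")
    case False
    then have "M - i \<in> L" "i = M - (M - i)"
      using that reflect no_middle assms(2) unfolding L_def by force+
    then show ?thesis by blast
  qed (use that in \<open>simp add: L_def\<close>)
  then have S: "S = L \<union> (\<lambda>i. M - i) ` L"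
    using reflect unfolding L_def by auto
  have "inj_on (\<lambda>i. M - i) L" using assms(2) unfolding L_def by (auto simp: inj_on_def)
  then have pairs: "(\<Prod>i\<in>S. f i) = (\<Prod>i\<in>L. f i * f (M - i))" for f :: "nat \<Rightarrow> int"
    using \<open>finite S\<close> unfolding S by (subst prod.union_disjoint) (auto simp: L_def prod.reindex prod.distrib)
  have "[(\<Prod>i\<in>L. (x - int i) * (x - int (M - i))) = (\<Prod>i\<in>L. int i * int (M - i))] (mod q ^ 2)"
  proof (rule cong_prod)
    fix i assume "i \<in> L"
    then have "(x - int i) * (x - int (M - i)) = int i * int (M - i) + x * (x - int M)"
      using assms(2) by (auto simp: L_def of_nat_diff algebra_simps)
    moreover have "q ^ 2 dvd x * (x - int M)"
      using assms(5,6) by (simp add: power2_eq_square mult_dvd_mono)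
    ultimately show "[(x - int i) * (x - int (M - i)) = int i * int (M - i)] (mod q ^ 2)"
      by (simp add: cong_iff_dvd_diff)
  qed
  then show ?thesis unfolding pairs .
qed

text \<open>
  Among the factors of \<open>(p n a - 1) \<cdots> (p n a - p n + 1)\<close>, those divisible by \<open>p\<close> contribute
  exactly \<open>p^(n - 1) (n a - 1) \<cdots> (n a - n + 1)\<close>.
\<close>

lemma binomial_mult_pred_factor:
  fixes p n a :: nat
  assumes "0 < p" "0 < n" "0 < a"
  defines "S \<equiv> {i\<in>{1..<p * n}. \<not> p dvd i}"
  shows "(\<Prod>i\<in>S. int i) * int ((p * n * a - 1) choose (p * n - 1))
       = int ((n * a - 1) choose (n - 1)) * (\<Prod>i\<in>S. int (p * n * a) - int i)"
proof -
  let ?c = "int p ^ (n - 1) * fact (n - 1)"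
  have "0 < p * n" using assms by simp
  have "fact (p * n - 1) = (\<Prod>j\<in>{1..<n}. int (p * j)) * (\<Prod>i\<in>S. int i)"
    unfolding S_def fact_eq_prod_atLeastLessThan[OF \<open>0 < p * n\<close>]
    by (rule prod_atLeastLessThan_mult_split[OF assms(1)])
  also have "(\<Prod>j\<in>{1..<n}. int (p * j)) = ?c"
    using fact_eq_prod_atLeastLessThan[OF assms(2)] by (simp add: prod.distrib)
  finally have fact: "fact (p * n - 1) = ?c * (\<Prod>i\<in>S. int i)" .
  have "fact (p * n - 1) * int ((p * n * a - 1) choose (p * n - 1))
      = (\<Prod>i\<in>{1..<p * n}. int (p * n * a) - int i)"
    by (rule fact_times_binomial_eq_prod[OF \<open>0 < p * n\<close> assms(3)])
  also have "\<dots> = (\<Prod>j\<in>{1..<n}. int p * (int (n * a) - int j)) * (\<Prod>i\<in>S. int (p * n * a) - int i)"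
    unfolding S_def prod_atLeastLessThan_mult_split[OF assms(1)]
    by (simp add: algebra_simps)
  also have "(\<Prod>j\<in>{1..<n}. int p * (int (n * a) - int j)) = ?c * int ((n * a - 1) choose (n - 1))"
    using fact_times_binomial_eq_prod[OF assms(2,3)] by (simp add: prod.distrib)
  finally have "?c * ((\<Prod>i\<in>S. int i) * int ((p * n * a - 1) choose (p * n - 1)))
      = ?c * (int ((n * a - 1) choose (n - 1)) * (\<Prod>i\<in>S. int (p * n * a) - int i))"
    unfolding fact by (simp add: ac_simps)
  then show ?thesis using assms(1) by simp
qed

lemma reflect_mem_not_dvd:
  fixes p n i :: nat
  assumes "i \<in> {i\<in>{1..<p * n}. \<not> p dvd i}"
  shows "p * n - i \<in> {i\<in>{1..<p * n}. \<not> p dvd i}"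
proof -
  have "\<not> p dvd p * n - i"
  proof
    assume "p dvd p * n - i"
    then have "p dvd p * n - (p * n - i)" by (simp add: dvd_diff_nat)
    then show False using assms by auto
  qed
  then show ?thesis using assms by auto
qed

lemma prod_not_dvd_cong:
  fixes p n r :: nat and x :: int
  assumes "prime p" "p ^ r dvd p * n" "int p ^ r dvd x" "odd p \<or> even n"
  defines "S \<equiv> {i\<in>{1..<p * n}. \<not> p dvd i}"
  shows "[(\<Prod>i\<in>S. x - int i) = (\<Prod>i\<in>S. int i)] (mod int p ^ (2 * r))"
proof -
  have "2 * i \<noteq> p * n" if "i \<in> S" for i
  proof
    assume mid: "2 * i = p * n"
    show False
    proof (cases "p = 2")
      case True
      then show False using mid that assms(4) by (auto simp: S_def)
    next
      case False
      then have "\<not> p dvd 2" using prime_gt_1_nat[OF assms(1)] dvd_imp_le[of p 2] by linarith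
      moreover have "p dvd 2 * i" using mid by simp
      ultimately show False using that assms(1) prime_dvd_mult_iff by (auto simp: S_def)
    qed
  qed
  moreover have "int p ^ r dvd int (p * n)" using assms(2) by (metis of_nat_dvd_iff of_nat_power)
  ultimately have "[(\<Prod>i\<in>S. x - int i) = (\<Prod>i\<in>S. int i)] (mod (int p ^ r) ^ 2)"
    using reflect_mem_not_dvd assms(3)
    by (intro prod_reflected_pairs_cong) (auto simp: S_def)
  then show ?thesis by (simp add: power_mult mult.commute)
qed

lemma two_mult_minus_one_cong_sign: "[2 * int a - 1 = (-1) ^ (a + 1)] (mod 4)"
proof (cases "even a")
  case True
  then obtain b where "a = 2 * b" by blast
  then show ?thesis by (simp add: cong_iff_dvd_diff)
next
  case False
  then obtain b where "a = 2 * b + 1" using oddE by blast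
  then show ?thesis by (simp add: cong_iff_dvd_diff)
qed

text \<open>
  For \<open>p = 2\<close> and odd \<open>n\<close> the middle factor \<open>i = n\<close> has no partner; it contributes
  \<open>2 n a - n \<equiv> (-1)^(a + 1) n mod 4\<close>.
\<close>

lemma prod_odd_cong_four:
  fixes n a :: nat
  assumes n: "odd n"
  defines "S \<equiv> {i\<in>{1..<2 * n}. \<not> 2 dvd i}"
  shows "[(\<Prod>i\<in>S. int (2 * n * a) - int i) = (-1) ^ (a + 1) * (\<Prod>i\<in>S. int i)] (mod 4)"
proof -
  define S' where "S' = S - {n}"
  have "n \<in> S" using n odd_pos[OF n] by (simp add: S_def)
  then have S: "S = insert n S'" "n \<notin> S'" "finite S'" unfolding S'_def S_def by auto
  have reflect: "2 * n - i \<in> S'" if "i \<in> S'" for i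
  proof -
    have "i \<in> S" "i \<noteq> n" "i < 2 * n" using that unfolding S'_def S_def by auto
    then show ?thesis using reflect_mem_not_dvd[of i 2 n] unfolding S'_def S_def by auto
  qed
  have "S' \<subseteq> {1..<2 * n}" unfolding S'_def S_def by blast
  moreover have "2 * i \<noteq> 2 * n" if "i \<in> S'" for i using that unfolding S'_def by simp
  ultimately have "[(\<Prod>i\<in>S'. int (2 * n * a) - int i) = (\<Prod>i\<in>S'. int i)] (mod 2 ^ 2)"
    by (intro prod_reflected_pairs_cong[OF S(3) _ reflect]) simp_all
  moreover have "[int (2 * n * a) - int n = (-1) ^ (a + 1) * int n] (mod 4)"
    using cong_scalar_left[OF two_mult_minus_one_cong_sign, of "int n" a]
    by (simp add: algebra_simps)
  ultimately have "[(int (2 * n * a) - int n) * (\<Prod>i\<in>S'. int (2 * n * a) - int i)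
      = ((-1) ^ (a + 1) * int n) * (\<Prod>i\<in>S'. int i)] (mod 4)"
    using cong_mult by fastforce
  then show ?thesis
    unfolding S(1) using S(2,3) by (simp add: mult.assoc)
qed

lemma coprime_prod_not_dvd:
  assumes "prime p"
  shows "coprime (\<Prod>i\<in>{i\<in>{1..<M}. \<not> p dvd i}. int i) (int p ^ k)"
proof -
  have "coprime (int i) (int p)" if "\<not> p dvd i" for i
    using that prime_imp_coprime[OF assms, of i] by (simp add: coprime_commute)
  then show ?thesis by (auto intro: prod_coprime_left)
qed

lemma binomial_mult_pred_cong_of_prod_cong:
  fixes p n a k :: nat and c :: int
  assumes p: "prime p" and "0 < n" "0 < a"
  defines "S \<equiv> {i\<in>{1..<p * n}. \<not> p dvd i}"
  assumes "[(\<Prod>i\<in>S. int (p * n * a) - int i) = c * (\<Prod>i\<in>S. int i)] (mod int p ^ k)"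
  shows "[int ((p * n * a - 1) choose (p * n - 1)) = c * int ((n * a - 1) choose (n - 1))] (mod int p ^ k)"
proof -
  let ?B = "int ((p * n * a - 1) choose (p * n - 1))" and ?B' = "int ((n * a - 1) choose (n - 1))"
  have "[?B' * (\<Prod>i\<in>S. int (p * n * a) - int i) = ?B' * (c * (\<Prod>i\<in>S. int i))] (mod int p ^ k)"
    using assms(5) by (rule cong_scalar_left)
  then have "[(\<Prod>i\<in>S. int i) * ?B = (\<Prod>i\<in>S. int i) * (c * ?B')] (mod int p ^ k)"
    unfolding S_def binomial_mult_pred_factor[OF prime_gt_0_nat[OF p] assms(2,3)] by (simp only: ac_simps)
  then show ?thesis
    unfolding S_def using cong_mult_lcancel[OF coprime_prod_not_dvd[OF p]] by blast
qed

lemma binomial_mult_pred_cong: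
  fixes p n a r :: nat
  assumes p: "prime p" and n: "0 < n" and a: "0 < a" and r: "p ^ r dvd p * n"
  shows "[(-1) ^ ((a + 1) * (p * n)) * int ((p * n * a - 1) choose (p * n - 1))
          = (-1) ^ ((a + 1) * n) * int ((n * a - 1) choose (n - 1))] (mod int p ^ (2 * r))"
proof (cases "odd p \<or> even n")
  case True
  have "int p ^ r dvd int (p * n * a)"
    using r by (metis dvd_mult2 of_nat_dvd_iff of_nat_power)
  then have "[int ((p * n * a - 1) choose (p * n - 1)) = 1 * int ((n * a - 1) choose (n - 1))]
      (mod int p ^ (2 * r))"
    using prod_not_dvd_cong[OF p r _ True] by (intro binomial_mult_pred_cong_of_prod_cong[OF p n a]) simp
  moreover have "(-1::int) ^ ((a + 1) * (p * n)) = (-1) ^ ((a + 1) * n)"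
    using True by (auto simp: minus_one_power_iff)
  ultimately show ?thesis by (simp add: cong_scalar_left)
next
  case False
  then have "p = 2" "odd n"
    using prime_odd_nat[OF p] prime_ge_2_nat[OF p] by (auto simp: le_less)
  have "r \<le> 1"
  proof (rule ccontr)
    assume "\<not> r \<le> 1"
    then have "(2::nat) ^ 2 dvd 2 ^ r" by (intro le_imp_power_dvd) simp
    then have "4 dvd 2 * n" using dvd_trans[OF _ r] unfolding \<open>p = 2\<close> by simp
    then show False using \<open>odd n\<close> by presburger
  qed
  then have "int p ^ (2 * r) dvd int p ^ 2"
    by (intro le_imp_power_dvd) simp
  have "[int ((p * n * a - 1) choose (p * n - 1)) = (-1) ^ (a + 1) * int ((n * a - 1) choose (n - 1))]
      (mod int p ^ 2)"
    using prod_odd_cong_four[OF \<open>odd n\<close>] unfolding \<open>p = 2\<close>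
    by (intro binomial_mult_pred_cong_of_prod_cong[OF two_is_prime_nat n a]) simp
  moreover have "(-1::int) ^ ((a + 1) * (p * n)) = 1" "(-1::int) ^ ((a + 1) * n) = (-1) ^ (a + 1)"
    using \<open>p = 2\<close> \<open>odd n\<close> by (simp_all add: minus_one_power_iff)
  ultimately show ?thesis
    using \<open>int p ^ (2 * r) dvd int p ^ 2\<close> by (auto intro: cong_dvd_modulus)
qed

text \<open>
  The integer \<open>(k a - 1) gchoose (k - 1)\<close>; the case \<open>a = 0\<close> is separate because \<open>k * 0 - 1\<close>
  truncates to \<open>0\<close> in \<open>nat\<close>.
\<close>

definition mult_pred_choose :: "nat \<Rightarrow> nat \<Rightarrow> int" where
  "mult_pred_choose a k = (if a = 0 then (-1) ^ (k - 1) else int ((k * a - 1) choose (k - 1)))"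

lemma of_int_mult_pred_choose:
  assumes "0 < k"
  shows "of_int (mult_pred_choose a k) = (of_int (int k * int a - 1) :: 'a::field_char_0) gchoose (k - 1)"
proof (cases "a = 0")
  case True
  have "((-1::'a) gchoose j) = (-1) ^ j" for j
    using gbinomial_minus[of "1::'a" j] binomial_gbinomial[of j j] by simp
  then show ?thesis using True by (simp add: mult_pred_choose_def)
next
  case False
  then have "int k * int a - 1 = int (k * a - 1)" using assms by (simp add: of_nat_diff)
  then show ?thesis using False by (simp add: mult_pred_choose_def binomial_gbinomial)
qed

text \<open>
  For \<open>a = d w - 1\<close>, the coefficient with which \<open>nS d\<close> enters \<open>(-1)^(l w + 1) l^2 N l\<close>
  for \<open>l = k d\<close>.
\<close>

definition cover_coeff :: "nat \<Rightarrow> nat \<Rightarrow> int" where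
  "cover_coeff a k = (-1) ^ ((a + 1) * k + 1) * mult_pred_choose a k"

lemma abs_cover_coeff_one: "\<bar>cover_coeff a 1\<bar> = 1"
  by (simp add: cover_coeff_def mult_pred_choose_def)

lemma cover_coeff_cong:
  assumes p: "prime p" and "0 < r" and "\<not> p dvd m"
  shows "[cover_coeff a (p ^ r * m) = cover_coeff a (p ^ (r - 1) * m)] (mod int p ^ (2 * r))"
proof -
  define n where "n = p ^ (r - 1) * m"
  have "0 < n" using assms prime_gt_0_nat[OF p] by (auto simp: n_def intro: Nat.gr0I)
  have pn: "p ^ r * m = p * n"
    using \<open>0 < r\<close> by (simp add: n_def power_eq_if)
  show ?thesis
  proof (cases "a = 0")
    case True
    have "cover_coeff 0 k = 1" if "0 < k" for k
      using that by (cases k) (simp_all add: cover_coeff_def mult_pred_choose_def)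
    then show ?thesis
      using True \<open>0 < n\<close> prime_gt_0_nat[OF p] unfolding pn n_def[symmetric] by simp
  next
    case False
    have coeff: "cover_coeff a k = - ((-1) ^ ((a + 1) * k) * int ((k * a - 1) choose (k - 1)))" for k
      using False by (simp add: cover_coeff_def mult_pred_choose_def)
    have "p ^ r dvd p * n" unfolding pn[symmetric] by simp
    from binomial_mult_pred_cong[OF p \<open>0 < n\<close> _ this] False
    show ?thesis
      unfolding pn n_def[symmetric] coeff cong_minus_minus_iff by (simp add: ac_simps)
  qed
qed

lemma weighted_invariant_relation:
  fixes w l :: nat and N I n nS :: "nat \<Rightarrow> 'a::field_char_0"
  assumes "0 < l" "0 < w"
    and NI: "N l = (-1) ^ (l * w + 1) * of_nat (l * w) * I l"
    and I: "I l = (\<Sum>d | d dvd l. n d * (1 / of_nat (l div d) ^ 3))"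
    and N: "N l = (\<Sum>d | d dvd l. nS d * (1 / of_nat (l div d) ^ 2) *
                  ((of_int (int (l div d) * (int (d * w) - 1) - 1)) gchoose (l div d - 1)))"
  shows "(\<Sum>d | d dvd l. of_nat (d ^ 2) * (of_nat (d * w) * n d))
       = (\<Sum>d | d dvd l. of_nat (d ^ 2) * nS d * of_int (cover_coeff (d * w - 1) (l div d)))"
proof -
  let ?\<sigma> = "(-1::'a) ^ (l * w + 1)"
  have "(\<Sum>d | d dvd l. of_nat (d ^ 2) * (of_nat (d * w) * n d))
      = of_nat w * (\<Sum>d | d dvd l. of_nat (d ^ 3) * n d)"
    by (simp add: sum_distrib_left power2_eq_square power3_eq_cube algebra_simps)
  also have "\<dots> = of_nat w * (of_nat (l ^ 3) * I l)"
    using scaled_divisor_sum[OF \<open>0 < l\<close>, of 3 "\<lambda>d _. n d"] by (simp add: I)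
  also have "\<dots> = ?\<sigma> * (of_nat (l ^ 2) * N l)"
    by (simp add: NI power2_eq_square power3_eq_cube algebra_simps flip: power_add)
  also have "of_nat (l ^ 2) * N l = (\<Sum>d | d dvd l. of_nat (d ^ 2) * (nS d *
        (of_int (int (l div d) * (int (d * w) - 1) - 1) gchoose (l div d - 1))))"
    using scaled_divisor_sum[OF \<open>0 < l\<close>, of 2
        "\<lambda>d k. nS d * (of_int (int k * (int (d * w) - 1) - 1) gchoose (k - 1))"]
    by (simp add: N)
  also have "?\<sigma> * \<dots> = (\<Sum>d | d dvd l. of_nat (d ^ 2) * nS d * of_int (cover_coeff (d * w - 1) (l div d)))"
    unfolding sum_distrib_left
  proof (rule sum.cong)
    fix d assume "d \<in> {d. d dvd l}"
    then have "0 < d" "0 < l div d" "l = d * (l div d)" using divisor_pos[OF \<open>0 < l\<close>] by auto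
    then have dw: "int (d * w) - 1 = int (d * w - 1)" and sign: "l * w = (d * w - 1 + 1) * (l div d)"
      using \<open>0 < w\<close> by (simp_all add: of_nat_diff)
    have "(of_int (int (l div d) * (int (d * w) - 1) - 1) :: 'a) gchoose (l div d - 1)
        = of_int (mult_pred_choose (d * w - 1) (l div d))"
      unfolding dw by (rule of_int_mult_pred_choose[OF \<open>0 < l div d\<close>, symmetric])
    then show "?\<sigma> * (of_nat (d ^ 2) * (nS d *
          (of_int (int (l div d) * (int (d * w) - 1) - 1) gchoose (l div d - 1))))
        = of_nat (d ^ 2) * nS d * of_int (cover_coeff (d * w - 1) (l div d))"
      unfolding sign by (simp add: cover_coeff_def)
  qed simp
  finally show ?thesis .
qed

theorem theorem1p8:
  fixes w :: nat
    and N I n nS :: "nat \<Rightarrow> rat"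
  assumes w_pos: "w \<ge> 1"
    and rel: "\<And>d. d \<ge> 1 \<Longrightarrow>
         N d = (-1) ^ (d * w + 1) * of_nat (d * w) * I d"
    and ser1: "\<And>l. l \<ge> 1 \<Longrightarrow>
         I l = (\<Sum>d | d dvd l. n d * (1 / of_nat (l div d) ^ 3))"
    and ser2: "\<And>l. l \<ge> 1 \<Longrightarrow>
         N l = (\<Sum>d | d dvd l. nS d * (1 / of_nat (l div d) ^ 2) *
                  ((of_int (int (l div d) * (int (d * w) - 1) - 1) :: rat)
                     gchoose (l div d - 1)))"
  shows "(\<forall>d \<ge> 1. nS d \<in> \<int>) \<longleftrightarrow> (\<forall>d \<ge> 1. of_nat (d * w) * n d \<in> \<int>)"
proof -
  define T where "T e = weighted_divisor_inverse 2 (cover_coeff (e * w - 1))" for e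
  have T: "cover_coeff (e * w - 1) k = (\<Sum>j | j dvd k. int (j ^ 2) * T e j)" if "0 < k" for e k
    unfolding T_def using cover_coeff_cong that by (rule weighted_divisor_inverse_sum)
  have "of_nat (l * w) * n l = (\<Sum>e | e dvd l. nS e * of_int (T e (l div e)))" if "0 < l" for l
  proof (rule divisor_convolution_eq[OF T])
    fix l :: nat assume "0 < l"
    then show "(\<Sum>d | d dvd l. of_nat (d ^ 2) * (of_nat (d * w) * n d))
        = (\<Sum>e | e dvd l. of_nat (e ^ 2) * nS e * of_int (cover_coeff (e * w - 1) (l div e)))"
      using w_pos rel ser1 ser2 by (intro weighted_invariant_relation) simp_all
  qed (use that in simp_all)
  moreover have "\<bar>T e 1\<bar> = 1" for e
    using T[of 1 e] abs_cover_coeff_one[of "e * w - 1"] by simp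
  ultimately have "(\<forall>d>0. nS d \<in> \<int>) \<longleftrightarrow> (\<forall>d>0. of_nat (d * w) * n d \<in> \<int>)"
    by (rule Ints_iff_of_unitriangular_divisor_sum)
  then show ?thesis by (simp add: Suc_le_eq)
qed

end
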